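(* Let $S$ be a straight left I-order in an inverse semigroup $Q$, and let $a,b,c,d\in S$ with $a\,\mathcal{R}^Q\,b$ and $c\,\mathcal{R}^Q\,d$. Then $a^{-1}b=c^{-1}d$ in $Q$ if and only if there exist $x,y\in S$ such that \[xa=yc,\quad xb=yd,\quad x\,\mathcal{R}^Q\,xa\,\mathcal{L}^Q\,a,\quad y\,\mathcal{R}^Q\,yc\,\mathcal{L}^Q\,c.\]
   Context: $a^{-1}$ is the unique inverse of $a$ in $Q$; $\mathcal{R}^Q,\mathcal{L}^Q$ are Green's relations of $Q$. A subsemigroup $S$ of $Q$ is a straight left I-order in $Q$ if every $q\in Q$ can be written $q=a^{-1}b$ with $a,b\in S$ and $a\,\mathcal{R}^Q\,b$. *)

theory Defs
  imports Main
begin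

text \<open>The inverse semigroup Q is the whole carrier of a type of class semigroup_mult.\<close>

definition inverse_semigroup :: "'a::semigroup_mult itself \<Rightarrow> bool" where
  "inverse_semigroup T \<longleftrightarrow> (\<forall>a::'a. \<exists>!b. a * b * a = a \<and> b * a * b = b)"

definition sinv :: "'a::semigroup_mult \<Rightarrow> 'a" where
  "sinv a = (THE b. a * b * a = a \<and> b * a * b = b)"

text \<open>Green's relations: a R b iff aQ^1 = bQ^1; a L b iff Q^1 a = Q^1 b.\<close>

definition greenR :: "'a::semigroup_mult \<Rightarrow> 'a \<Rightarrow> bool" where
  "greenR a b \<longleftrightarrow> (a = b \<or> (\<exists>u. a = b * u)) \<and> (b = a \<or> (\<exists>u. b = a * u))"

definition greenL :: "'a::semigroup_mult \<Rightarrow> 'a \<Rightarrow> bool" where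
  "greenL a b \<longleftrightarrow> (a = b \<or> (\<exists>u. a = u * b)) \<and> (b = a \<or> (\<exists>u. b = u * a))"

definition subsemigroup :: "'a::semigroup_mult set \<Rightarrow> bool" where
  "subsemigroup S \<longleftrightarrow> (\<forall>a\<in>S. \<forall>b\<in>S. a * b \<in> S)"

definition straight_left_I_order :: "'a::semigroup_mult set \<Rightarrow> bool" where
  "straight_left_I_order S \<longleftrightarrow> subsemigroup S \<and>
     (\<forall>q::'a. \<exists>a\<in>S. \<exists>b\<in>S. q = sinv a * b \<and> greenR a b)"

end

theory Submission
  imports Defs
begin

text \<open>Idempotents of an inverse semigroup commute, so \<open>a \<R> b\<close> means \<open>aa\<inverse> = bb\<inverse>\<close> and
  \<open>a \<L> b\<close> means \<open>a\<inverse>a = b\<inverse>b\<close>. If \<open>a\<inverse>b = c\<inverse>d\<close>, comparing \<open>ss\<inverse>\<close> for this element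
  gives \<open>a\<inverse>a = c\<inverse>c\<close>; writing \<open>ac\<inverse> = x\<inverse>y\<close> with \<open>x \<R> y\<close> in \<open>S\<close> then forces
  \<open>y = xac\<inverse>\<close>, \<open>x\<inverse>x = aa\<inverse>\<close> and \<open>y\<inverse>y = cc\<inverse>\<close>, from which the required equations and
  Green relations follow. Conversely, \<open>xa \<L> a\<close> lets \<open>x\<close> cancel: \<open>(xa)\<inverse>(xb) = a\<inverse>b\<close>.\<close>

locale inverse_semigroup_type =
  fixes T :: "'a::semigroup_mult itself"
  assumes inverse_semigroup: "inverse_semigroup T"
begin

lemma sinv_unique: "\<exists>!b. (a::'a) * b * a = a \<and> b * a * b = b"
  using inverse_semigroup unfolding inverse_semigroup_def by blast

lemma mult_sinv_mult: "(a::'a) * sinv a * a = a"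
  and sinv_mult_sinv: "sinv a * a * sinv a = sinv a"
  using theI'[OF sinv_unique[of a]] unfolding sinv_def[symmetric] by auto

lemma sinv_eqI:
  assumes "(a::'a) * b * a = a" "b * a * b = b"
  shows "sinv a = b"
  unfolding sinv_def by (rule the1_equality[OF sinv_unique]) (simp add: assms)

lemma sinv_sinv [simp]: "sinv (sinv (a::'a)) = a"
  by (rule sinv_eqI) (simp_all add: mult_sinv_mult sinv_mult_sinv)

lemma sinv_idem:
  assumes "(e::'a) * e = e"
  shows "sinv e = e"
  by (rule sinv_eqI) (simp_all add: assms)

text \<open>The inverse \<open>x\<close> of \<open>ef\<close> satisfies \<open>x = fxe\<close> by uniqueness of inverses, so it is
  idempotent, and then so is \<open>ef = x\<inverse>\<close>.\<close>

lemma idem_mult_idem: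
  assumes e: "(e::'a) * e = e" and f: "f * f = f"
  shows "e * f * (e * f) = e * f"
proof -
  define x where "x = sinv (e * f)"
  have x1: "e * f * x * (e * f) = e * f" and x2: "x * (e * f) * x = x"
    unfolding x_def by (rule mult_sinv_mult sinv_mult_sinv)+
  have "sinv (e * f) = f * x * e"
  proof (rule sinv_eqI)
    have "e * f * (f * x * e) * (e * f) = e * (f * f) * x * (e * e) * f"
      by (simp add: mult.assoc)
    also have "\<dots> = e * f"
      using x1 by (simp add: e f mult.assoc)
    finally show "e * f * (f * x * e) * (e * f) = e * f" .
    have "f * x * e * (e * f) * (f * x * e) = f * (x * (e * e) * (f * f) * x) * e"
      by (simp add: mult.assoc)
    also have "\<dots> = f * x * e"
      using x2 by (simp add: e f mult.assoc)
    finally show "f * x * e * (e * f) * (f * x * e) = f * x * e" .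
  qed
  then have x_eq: "x = f * x * e"
    unfolding x_def .
  have "x * x = f * (x * (e * f) * x) * e"
    by (subst (1 2) x_eq) (simp add: mult.assoc)
  also have "\<dots> = x"
    using x2 x_eq by simp
  finally have "x * x = x" .
  moreover have "e * f = sinv x"
    unfolding x_def by simp
  ultimately show ?thesis
    using sinv_idem by simp
qed

lemma idem_commute:
  assumes e: "(e::'a) * e = e" and f: "f * f = f"
  shows "e * f = f * e"
proof -
  have ef: "e * f * (e * f) = e * f" and fe: "f * e * (f * e) = f * e"
    using idem_mult_idem e f by blast+
  have "sinv (e * f) = f * e"
  proof (rule sinv_eqI)
    have "e * f * (f * e) * (e * f) = e * (f * f) * (e * e) * f"
      by (simp add: mult.assoc)
    then show "e * f * (f * e) * (e * f) = e * f"
      using ef by (simp add: e f mult.assoc)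
    have "f * e * (e * f) * (f * e) = f * (e * e) * (f * f) * e"
      by (simp add: mult.assoc)
    then show "f * e * (e * f) * (f * e) = f * e"
      using fe by (simp add: e f mult.assoc)
  qed
  then show ?thesis
    using sinv_idem[OF ef] by simp
qed

lemma idem_mult_sinv: "(a::'a) * sinv a * (a * sinv a) = a * sinv a"
  and idem_sinv_mult: "sinv a * a * (sinv a * a) = sinv a * a"
  by (metis mult.assoc mult_sinv_mult)+

lemma sinv_mult: "sinv ((a::'a) * b) = sinv b * sinv a"
proof (rule sinv_eqI)
  have comm: "b * sinv b * (sinv a * a) = sinv a * a * (b * sinv b)"
    by (rule idem_commute[OF idem_mult_sinv idem_sinv_mult])
  have "a * b * (sinv b * sinv a) * (a * b) = a * (b * sinv b * (sinv a * a)) * b"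
    by (simp add: mult.assoc)
  also have "\<dots> = a * (sinv a * a * (b * sinv b)) * b"
    by (simp only: comm)
  also have "\<dots> = (a * sinv a * a) * (b * sinv b * b)"
    by (simp add: mult.assoc)
  finally show "a * b * (sinv b * sinv a) * (a * b) = a * b"
    by (simp only: mult_sinv_mult)
  have "sinv b * sinv a * (a * b) * (sinv b * sinv a) = sinv b * (sinv a * a * (b * sinv b)) * sinv a"
    by (simp add: mult.assoc)
  also have "\<dots> = sinv b * (b * sinv b * (sinv a * a)) * sinv a"
    by (simp only: comm)
  also have "\<dots> = (sinv b * b * sinv b) * (sinv a * a * sinv a)"
    by (simp add: mult.assoc)
  finally show "sinv b * sinv a * (a * b) * (sinv b * sinv a) = sinv b * sinv a"
    by (simp only: sinv_mult_sinv)
qed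

lemma right_divisible_iff: "((a::'a) = b \<or> (\<exists>u. a = b * u)) \<longleftrightarrow> b * sinv b * a = a"
proof
  assume "a = b \<or> (\<exists>u. a = b * u)"
  then obtain u where "a = b \<or> a = b * u"
    by blast
  then show "b * sinv b * a = a"
    by (metis mult.assoc mult_sinv_mult)
next
  assume "b * sinv b * a = a"
  then have "a = b * (sinv b * a)"
    by (simp add: mult.assoc)
  then show "a = b \<or> (\<exists>u. a = b * u)"
    by blast
qed

lemma left_divisible_iff: "((a::'a) = b \<or> (\<exists>u. a = u * b)) \<longleftrightarrow> a * (sinv b * b) = a"
proof
  assume "a = b \<or> (\<exists>u. a = u * b)"
  then obtain u where "a = b \<or> a = u * b"
    by blast
  then show "a * (sinv b * b) = a"
    by (metis mult.assoc mult_sinv_mult)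
next
  assume "a * (sinv b * b) = a"
  then have "a = a * sinv b * b"
    by (simp add: mult.assoc)
  then show "a = b \<or> (\<exists>u. a = u * b)"
    by blast
qed

lemma greenR_iff: "greenR (a::'a) b \<longleftrightarrow> a * sinv a = b * sinv b"
proof -
  have "greenR a b \<longleftrightarrow> b * sinv b * a = a \<and> a * sinv a * b = b"
    unfolding greenR_def right_divisible_iff ..
  also have "\<dots> \<longleftrightarrow> a * sinv a = b * sinv b"
  proof
    assume "b * sinv b * a = a \<and> a * sinv a * b = b"
    then have "a * sinv a = b * sinv b * (a * sinv a)" and "b * sinv b = a * sinv a * (b * sinv b)"
      by (simp_all add: mult.assoc[symmetric])
    then show "a * sinv a = b * sinv b"
      using idem_commute[OF idem_mult_sinv idem_mult_sinv] by metis
  qed (metis mult_sinv_mult)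
  finally show ?thesis .
qed

lemma greenL_iff: "greenL (a::'a) b \<longleftrightarrow> sinv a * a = sinv b * b"
proof -
  have "greenL a b \<longleftrightarrow> a * (sinv b * b) = a \<and> b * (sinv a * a) = b"
    unfolding greenL_def left_divisible_iff ..
  also have "\<dots> \<longleftrightarrow> sinv a * a = sinv b * b"
  proof
    assume "a * (sinv b * b) = a \<and> b * (sinv a * a) = b"
    then have "sinv a * a = sinv a * a * (sinv b * b)" and "sinv b * b = sinv b * b * (sinv a * a)"
      by (simp_all add: mult.assoc)
    then show "sinv a * a = sinv b * b"
      using idem_commute[OF idem_sinv_mult idem_sinv_mult] by metis
  qed (metis mult.assoc mult_sinv_mult)
  finally show ?thesis .
qed

lemma greenR_cancel:
  assumes "greenR (a::'a) b"
  shows "a * (sinv a * b) = b"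
  using assms unfolding greenR_def right_divisible_iff by (simp add: mult.assoc)

lemma greenR_sinv_mult_left_unit:
  assumes "greenR (p::'a) q"
  shows "sinv p * q * sinv (sinv p * q) = sinv p * p"
proof -
  have "sinv p * q * sinv (sinv p * q) = sinv p * (q * sinv q) * p"
    by (simp add: sinv_mult mult.assoc)
  also have "\<dots> = sinv p * (p * sinv p) * p"
    using assms by (simp add: greenR_iff)
  also have "\<dots> = sinv p * p"
    by (metis mult.assoc sinv_mult_sinv)
  finally show ?thesis .
qed

lemma greenR_sinv_mult_right_unit:
  assumes "greenR (p::'a) q"
  shows "sinv (sinv p * q) * (sinv p * q) = sinv q * q"
proof -
  have "sinv (sinv p * q) * (sinv p * q) = sinv q * (p * sinv p) * q"
    by (simp add: sinv_mult mult.assoc)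
  also have "\<dots> = sinv q * (q * sinv q) * q"
    using assms by (simp add: greenR_iff)
  also have "\<dots> = sinv q * q"
    by (metis mult.assoc sinv_mult_sinv)
  finally show ?thesis .
qed

lemma greenR_greenL_if_sinv_mult_eq:
  assumes "sinv (x::'a) * x = a * sinv a"
  shows "greenR x (x * a)" and "greenL (x * a) a"
proof -
  have "x * a * sinv (x * a) = x * (a * sinv a) * sinv x"
    by (simp add: sinv_mult mult.assoc)
  also have "\<dots> = x * sinv x * (x * sinv x)"
    by (simp add: assms[symmetric] mult.assoc)
  finally show "greenR x (x * a)"
    by (simp add: greenR_iff idem_mult_sinv)
  have "sinv (x * a) * (x * a) = sinv a * (sinv x * x) * a"
    by (simp add: sinv_mult mult.assoc)
  also have "\<dots> = sinv a * a * (sinv a * a)"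
    by (simp add: assms mult.assoc)
  finally show "greenL (x * a) a"
    by (simp add: greenL_iff idem_sinv_mult)
qed

lemma sinv_mult_cancel_left:
  assumes "greenR (a::'a) b" and "greenL (x * a) a"
  shows "sinv (x * a) * (x * b) = sinv a * b"
proof -
  have "sinv (x * a) * (x * b) = sinv (x * a) * (x * a) * (sinv a * b)"
    using greenR_cancel[OF assms(1)] by (metis mult.assoc)
  also have "\<dots> = sinv a * a * (sinv a * b)"
    using assms(2) by (simp add: greenL_iff)
  also have "\<dots> = sinv a * b"
    by (metis mult.assoc sinv_mult_sinv)
  finally show ?thesis .
qed

lemma common_left_multipliers:
  assumes ab: "greenR (a::'a) b" and cd: "greenR c d" and eq: "sinv a * b = sinv c * d"
    and xy: "greenR x y" and q: "sinv x * y = a * sinv c"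
  shows "x * a = y * c" and "x * b = y * d"
    and "greenR x (x * a)" and "greenL (x * a) a"
    and "greenR y (y * c)" and "greenL (y * c) c"
proof -
  have "sinv a * a = sinv c * c"
    using greenR_sinv_mult_left_unit[OF ab] greenR_sinv_mult_left_unit[OF cd] eq by simp
  then have ac: "greenR (sinv a) (sinv c)"
    by (simp add: greenR_iff)
  have q': "sinv x * y = sinv (sinv a) * sinv c"
    using q by simp
  have "sinv x * x = a * sinv a"
    using greenR_sinv_mult_left_unit[OF xy] greenR_sinv_mult_left_unit[OF ac] q' by simp
  then show "greenR x (x * a)" and "greenL (x * a) a"
    by (rule greenR_greenL_if_sinv_mult_eq)+
  have "sinv y * y = c * sinv c"
    using greenR_sinv_mult_right_unit[OF xy] greenR_sinv_mult_right_unit[OF ac] q' by simp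
  then show "greenR y (y * c)" and "greenL (y * c) c"
    by (rule greenR_greenL_if_sinv_mult_eq)+
  have y: "y = x * (a * sinv c)"
    using greenR_cancel[OF xy] q by simp
  have "y * c = x * a * (sinv a * a)"
    using \<open>sinv a * a = sinv c * c\<close> by (simp add: y mult.assoc)
  then show "x * a = y * c"
    by (metis mult.assoc mult_sinv_mult)
  have "y * d = x * (a * (sinv a * b))"
    using eq by (simp add: y mult.assoc)
  then show "x * b = y * d"
    by (simp add: greenR_cancel[OF ab])
qed

end

theorem lemma3p4:
  fixes S :: "'a::semigroup_mult set" and a b c d :: 'a
  assumes "inverse_semigroup TYPE('a)"
    and "straight_left_I_order S"
    and "a \<in> S" "b \<in> S" "c \<in> S" "d \<in> S"
    and "greenR a b" "greenR c d"
  shows "sinv a * b = sinv c * d \<longleftrightarrow>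
    (\<exists>x\<in>S. \<exists>y\<in>S. x * a = y * c \<and> x * b = y * d \<and>
       greenR x (x * a) \<and> greenL (x * a) a \<and>
       greenR y (y * c) \<and> greenL (y * c) c)"
proof -
  interpret inverse_semigroup_type "TYPE('a)"
    by unfold_locales (fact assms(1))
  show ?thesis
  proof
    assume eq: "sinv a * b = sinv c * d"
    obtain x y where "x \<in> S" "y \<in> S" "a * sinv c = sinv x * y" "greenR x y"
      using assms(2) unfolding straight_left_I_order_def by blast
    with common_left_multipliers[OF assms(7,8) eq] show "\<exists>x\<in>S. \<exists>y\<in>S. x * a = y * c \<and> x * b = y * d \<and>
       greenR x (x * a) \<and> greenL (x * a) a \<and> greenR y (y * c) \<and> greenL (y * c) c"
      by metis
  next
    assume "\<exists>x\<in>S. \<exists>y\<in>S. x * a = y * c \<and> x * b = y * d \<and>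
       greenR x (x * a) \<and> greenL (x * a) a \<and> greenR y (y * c) \<and> greenL (y * c) c"
    then obtain x y where "x * a = y * c" "x * b = y * d" "greenL (x * a) a" "greenL (y * c) c"
      by blast
    then show "sinv a * b = sinv c * d"
      using sinv_mult_cancel_left[OF assms(7)] sinv_mult_cancel_left[OF assms(8)] by metis
  qed
qed

end
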